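(* Let $n>1$, $j_0,\dots,j_{n-1}\in\mathbb Z/(n)$ with $j_i=j_{-i}$ for all $i$, and let $B=B_{j_0,\dots,j_{n-1}}$, $X$ and $r_{j_0,\dots,j_{n-1}}$ be as in the context. Then $(X,r_{j_0,\dots,j_{n-1}})$ is a solution of the YBE, and: (a) it is indecomposable if and only if the additive subgroup of $\mathbb Z/(n)$ generated by $j_0,\dots,j_{n-1}$ is $\mathbb Z/(n)$; (b) it is irretractable if and only if the $n$ rows of the matrix $(j_{l-k})_{k,l\in\mathbb Z/(n)}$ are pairwise distinct, i.e. if $i,i'\in\mathbb Z/(n)$ satisfy $j_{i+k}=j_{i'+k}$ for every $k$, then $i=i'$.
   Context: Let $n>1$ and let $e_i$ ($i\in\mathbb Z/(n)$) be the standard basis of the free $\mathbb Z/(n)$-module $(\mathbb Z/(n))^n$, indices in $\mathbb Z/(n)$. Let $\alpha:\mathbb Z/(n)\to\mathrm{Aut}((\mathbb Z/(n))^n)$, $\alpha(i)(e_k)=e_{i+k}$. Given $j_0,\dots,j_{n-1}\in\mathbb Z/(n)$ with $j_i=j_{-i}$, let $b=b_{j_0,\dots,j_{n-1}}$ be the bilinear form on $(\mathbb Z/(n))^n$ with $b(e_k,e_l)=j_{l-k}$. $B_{j_0,\dots,j_{n-1}}$ is the set $(\mathbb Z/(n))^n\times\mathbb Z/(n)$ with multiplication $(u,i)\circ(v,j)=(u+\alpha(i)(v),i+j)$ and addition $(u,i)+(v,j)=(u+v,i+j+b(u,v))$; this is a left brace (a set with abelian group $+$ and group $\circ$ satisfying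 $a\circ(b+c)+a=a\circ b+a\circ c$), with lambda map $\lambda_{(u,i)}(v,j)=-(u,i)+(u,i)\circ(v,j)=(\alpha(i)(v),\ j-b(u,\alpha(i)(v)))$. Let $x_{ij}=(e_i,j)$ and $X=\{x_{ij}: i,j\in\mathbb Z/(n)\}$; then $\lambda_{x_{ij}}(x_{kl})=x_{k+j,\ l-j_{k+j-i}}$. Define $r_{j_0,\dots,j_{n-1}}:X\times X\to X\times X$ by $r(x,y)=(\lambda_x(y),\lambda^{-1}_{\lambda_x(y)}(x))$. A solution of the YBE is a pair $(X,r)$, $r(x,y)=(\sigma_x(y),\gamma_y(x))$, with $r^2=\mathrm{id}$, all $\sigma_x,\gamma_x$ bijective, and $r_{12}r_{23}r_{12}=r_{23}r_{12}r_{23}$; indecomposable means $\langle\sigma_x\rangle\le\mathrm{Sym}_X$ is transitive; irretractable means $\sigma_x\ne\sigma_y$ for $x\ne y$. *)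

theory Defs
  imports Main
begin

text \<open>Z/(n) is represented by the integers 0..n-1, all arithmetic
reduced with mod n. A vector of (Z/(n))^n is a function int => int with values in
0..n-1 on indices 0..n-1 and 0 outside. The parameters j_0..j_{n-1} are a function
jj :: int => int, always accessed as jj (k mod n).\<close>

definition zn :: "int \<Rightarrow> int set" where
  "zn n = {0..<n}"

definition vecs :: "int \<Rightarrow> (int \<Rightarrow> int) set" where
  "vecs n = {u. (\<forall>k\<in>zn n. u k \<in> zn n) \<and> (\<forall>k. k \<notin> zn n \<longrightarrow> u k = 0)}"

definition Bset :: "int \<Rightarrow> ((int \<Rightarrow> int) \<times> int) set" where
  "Bset n = vecs n \<times> zn n"

definition evec :: "int \<Rightarrow> int \<Rightarrow> (int \<Rightarrow> int)" where
  "evec n i = (\<lambda>k. if k = i mod n then 1 else 0)"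

text \<open>alpha(i)(v), so that alpha(i)(e_k) = e_(i+k)\<close>
definition alpha :: "int \<Rightarrow> int \<Rightarrow> (int \<Rightarrow> int) \<Rightarrow> (int \<Rightarrow> int)" where
  "alpha n i v = (\<lambda>m. if m \<in> zn n then v ((m - i) mod n) else 0)"

definition bform :: "int \<Rightarrow> (int \<Rightarrow> int) \<Rightarrow> (int \<Rightarrow> int) \<Rightarrow> (int \<Rightarrow> int) \<Rightarrow> int" where
  "bform n jj u v = (\<Sum>k\<in>zn n. \<Sum>l\<in>zn n. u k * v l * jj ((l - k) mod n)) mod n"

definition blam :: "int \<Rightarrow> (int \<Rightarrow> int) \<Rightarrow> ((int \<Rightarrow> int) \<times> int) \<Rightarrow> ((int \<Rightarrow> int) \<times> int) \<Rightarrow> ((int \<Rightarrow> int) \<times> int)" where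
  "blam n jj a c = (case a of (u, i) \<Rightarrow> case c of (v, j) \<Rightarrow>
      (alpha n i v, (j - bform n jj u (alpha n i v)) mod n))"

definition blam_inv :: "int \<Rightarrow> (int \<Rightarrow> int) \<Rightarrow> ((int \<Rightarrow> int) \<times> int) \<Rightarrow> ((int \<Rightarrow> int) \<times> int) \<Rightarrow> ((int \<Rightarrow> int) \<times> int)" where
  "blam_inv n jj a = the_inv_into (Bset n) (blam n jj a)"

definition xel :: "int \<Rightarrow> int \<Rightarrow> int \<Rightarrow> ((int \<Rightarrow> int) \<times> int)" where
  "xel n i j = (evec n i, j mod n)"

definition Xset :: "int \<Rightarrow> ((int \<Rightarrow> int) \<times> int) set" where
  "Xset n = {xel n i j | i j. i \<in> zn n \<and> j \<in> zn n}"

definition rmap :: "int \<Rightarrow> (int \<Rightarrow> int) \<Rightarrow> ((int \<Rightarrow> int) \<times> int) \<times> ((int \<Rightarrow> int) \<times> int)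
    \<Rightarrow> ((int \<Rightarrow> int) \<times> int) \<times> ((int \<Rightarrow> int) \<times> int)" where
  "rmap n jj p = (case p of (x, y) \<Rightarrow>
      (blam n jj x y, blam_inv n jj (blam n jj x y) x))"

definition sig :: "('a \<times> 'a \<Rightarrow> 'a \<times> 'a) \<Rightarrow> 'a \<Rightarrow> 'a \<Rightarrow> 'a" where
  "sig r x y = fst (r (x, y))"

definition gam :: "('a \<times> 'a \<Rightarrow> 'a \<times> 'a) \<Rightarrow> 'a \<Rightarrow> 'a \<Rightarrow> 'a" where
  "gam r y x = snd (r (x, y))"

definition r12 :: "('a \<times> 'a \<Rightarrow> 'a \<times> 'a) \<Rightarrow> 'a \<times> 'a \<times> 'a \<Rightarrow> 'a \<times> 'a \<times> 'a" where
  "r12 r t = (case t of (x, y, z) \<Rightarrow> (case r (x, y) of (a, b) \<Rightarrow> (a, b, z)))"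

definition r23 :: "('a \<times> 'a \<Rightarrow> 'a \<times> 'a) \<Rightarrow> 'a \<times> 'a \<times> 'a \<Rightarrow> 'a \<times> 'a \<times> 'a" where
  "r23 r t = (case t of (x, y, z) \<Rightarrow> (case r (y, z) of (b, c) \<Rightarrow> (x, b, c)))"

definition ybe_solution :: "'a set \<Rightarrow> ('a \<times> 'a \<Rightarrow> 'a \<times> 'a) \<Rightarrow> bool" where
  "ybe_solution X r \<longleftrightarrow>
     (\<forall>p \<in> X \<times> X. r p \<in> X \<times> X) \<and>
     (\<forall>p \<in> X \<times> X. r (r p) = p) \<and>
     (\<forall>x \<in> X. bij_betw (sig r x) X X) \<and>
     (\<forall>x \<in> X. bij_betw (gam r x) X X) \<and>
     (\<forall>t \<in> X \<times> X \<times> X. r12 r (r23 r (r12 r t)) = r23 r (r12 r (r23 r t)))"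

inductive_set sig_group :: "'a set \<Rightarrow> ('a \<times> 'a \<Rightarrow> 'a \<times> 'a) \<Rightarrow> ('a \<Rightarrow> 'a) set"
  for X r where
  sg_id: "id \<in> sig_group X r"
| sg_gen: "x \<in> X \<Longrightarrow> g \<in> sig_group X r \<Longrightarrow> (sig r x \<circ> g) \<in> sig_group X r"
| sg_inv: "x \<in> X \<Longrightarrow> g \<in> sig_group X r \<Longrightarrow> (inv_into X (sig r x) \<circ> g) \<in> sig_group X r"

definition indecomposable :: "'a set \<Rightarrow> ('a \<times> 'a \<Rightarrow> 'a \<times> 'a) \<Rightarrow> bool" where
  "indecomposable X r \<longleftrightarrow> (\<forall>x\<in>X. \<forall>y\<in>X. \<exists>g\<in>sig_group X r. g x = y)"

definition irretractable :: "'a set \<Rightarrow> ('a \<times> 'a \<Rightarrow> 'a \<times> 'a) \<Rightarrow> bool" where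
  "irretractable X r \<longleftrightarrow>
     (\<forall>x\<in>X. \<forall>y\<in>X. x \<noteq> y \<longrightarrow> (\<exists>z\<in>X. sig r x z \<noteq> sig r y z))"

definition gen_subgroup :: "int \<Rightarrow> (int \<Rightarrow> int) \<Rightarrow> int set" where
  "gen_subgroup n jj = {(\<Sum>i\<in>zn n. c i * jj i) mod n | c. True}"

end

theory Submission
  imports Defs
begin

text \<open>In the coordinates \<open>x\<^sub>i\<^sub>j \<mapsto> (i, j)\<close> the map \<open>r\<close> reads
\<open>((i, j), (k, l)) \<mapsto> ((k + j, l - J(k + j - i)), (i - l + J(k + j - i), j + J(k + j - i)))\<close>
with \<open>J t = j\<^sub>t\<close>. Involutivity and the braid relation are identities for this formula over any
abelian group and any even \<open>J\<close>, and they descend to \<open>X\<close> because the formula respects congruence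
mod \<open>n\<close>. Since \<open>\<sigma>\<^bsub>(i,j)\<^esub>(k, l) = (k + j, l - J(k + j - i))\<close>, the class of the second coordinate
modulo the subgroup \<open>H\<close> generated by the \<open>j\<^sub>t\<close> is invariant under the permutation group, while
\<open>\<sigma>\<^bsub>(k - m, 0)\<^esub>\<close> fixes the first coordinate \<open>k\<close> and shifts the second by \<open>-j\<^sub>m\<close>; so the orbits are
exactly \<open>X\<close> modulo \<open>H\<close>, giving (a). Finally \<open>\<sigma>\<^bsub>(i,j)\<^esub>\<close> determines \<open>j\<close> and the row
\<open>k \<mapsto> J(k - i)\<close>, giving (b).\<close>

section \<open>The coordinate formula\<close>

definition rpair ::
    "('a::ab_group_add \<Rightarrow> 'a) \<Rightarrow> ('a \<times> 'a) \<times> ('a \<times> 'a) \<Rightarrow> ('a \<times> 'a) \<times> ('a \<times> 'a)" where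
  "rpair J = (\<lambda>((i, j), (k, l)). let t = J (k + j - i) in ((k + j, l - t), (i - l + t, j + t)))"

lemma rpair_involutive:
  assumes "\<And>t. J (- t) = J t"
  shows "rpair J (rpair J p) = p"
proof -
  obtain i j k l where p: "p = ((i, j), (k, l))" by (metis prod.collapse)
  have "J (i - k - j) = J (k + j - i)" using assms[of "k + j - i"] by (simp add: algebra_simps)
  then show ?thesis unfolding p rpair_def by (simp add: Let_def algebra_simps)
qed

lemma rpair_braid:
  assumes "\<And>t. J (- t) = J t"
  shows "r12 (rpair J) (r23 (rpair J) (r12 (rpair J) t))
    = r23 (rpair J) (r12 (rpair J) (r23 (rpair J) t))"
proof -
  obtain a b c where t: "t = (a, b, c)" by (metis prod.collapse)
  show ?thesis unfolding t using assms
    by (cases a; cases b; cases c) (simp add: rpair_def r12_def r23_def Let_def algebra_simps)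
qed

lemma r12_map_prod:
  assumes "\<And>q. r (map_prod P P q) = map_prod P P (R q)"
  shows "r12 r (map_prod P (map_prod P P) t) = map_prod P (map_prod P P) (r12 R t)"
  using assms[of "(fst t, fst (snd t))"] by (cases t) (simp add: r12_def split: prod.split)

lemma r23_map_prod:
  assumes "\<And>q. r (map_prod P P q) = map_prod P P (R q)"
  shows "r23 r (map_prod P (map_prod P P) t) = map_prod P (map_prod P P) (r23 R t)"
  using assms[of "snd t"] by (cases t) (simp add: r23_def split: prod.split)

lemma sig_group_comp:
  "g \<in> sig_group X r \<Longrightarrow> h \<in> sig_group X r \<Longrightarrow> g \<circ> h \<in> sig_group X r"
proof (induction g rule: sig_group.induct)
  case sg_id
  then show ?case by simp
next
  case (sg_gen x g)
  then show ?case by (metis comp_assoc sig_group.sg_gen)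
next
  case (sg_inv x g)
  then show ?case by (metis comp_assoc sig_group.sg_inv)
qed

definition jmod :: "int \<Rightarrow> (int \<Rightarrow> int) \<Rightarrow> int \<Rightarrow> int" where
  "jmod n jj t = jj (t mod n)"

definition xelp :: "int \<Rightarrow> int \<times> int \<Rightarrow> (int \<Rightarrow> int) \<times> int" where
  "xelp n = (\<lambda>(i, j). xel n i j)"

lemma finite_zn: "finite (zn n)"
  by (simp add: zn_def)

lemma jmod_cong: "n dvd a - b \<Longrightarrow> jmod n jj a = jmod n jj b"
  unfolding jmod_def by (metis mod_eq_dvd_iff)

context
  fixes n :: int
  assumes n_gt1: "n > 1"
begin

lemma n_pos: "n > 0"
  using n_gt1 by simp

lemma mod_in_zn: "a mod n \<in> zn n"
  using n_pos by (simp add: zn_def)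

lemma zn_eqI: "a \<in> zn n \<Longrightarrow> b \<in> zn n \<Longrightarrow> n dvd a - b \<Longrightarrow> a = b"
  unfolding zn_def by (simp add: mod_eq_dvd_iff[symmetric])

lemma evec_eq_iff: "evec n i = evec n i' \<longleftrightarrow> n dvd i - i'"
proof
  assume "evec n i = evec n i'"
  then have "evec n i (i mod n) = evec n i' (i mod n)" by simp
  then have "i mod n = i' mod n" unfolding evec_def by (auto split: if_splits)
  then show "n dvd i - i'" by (simp add: mod_eq_dvd_iff)
qed (simp add: evec_def flip: mod_eq_dvd_iff)

lemma xel_eq_iff: "xel n i j = xel n i' j' \<longleftrightarrow> n dvd i - i' \<and> n dvd j - j'"
  unfolding xel_def by (simp add: evec_eq_iff mod_eq_dvd_iff)

lemma Xset_eq_range: "Xset n = range (xelp n)"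
proof -
  have "xel n i j = xel n (i mod n) (j mod n)" for i j
    by (simp add: xel_eq_iff mod_eq_dvd_iff[symmetric])
  then show ?thesis unfolding Xset_def xelp_def using mod_in_zn by fastforce
qed

lemma XsetE:
  assumes "x \<in> Xset n"
  obtains i j where "x = xel n i j" "i \<in> zn n" "j \<in> zn n"
  using assms unfolding Xset_def by blast

lemma xel_in_Xset: "xel n i j \<in> Xset n"
  using Xset_eq_range by (metis case_prod_conv rangeI xelp_def)

lemma finite_Xset: "finite (Xset n)"
  unfolding Xset_def using finite_image_set2[of "\<lambda>i. i \<in> zn n" "\<lambda>j. j \<in> zn n"]
  by (simp add: zn_def)

lemma xel_in_Bset: "xel n i j \<in> Bset n"
  using n_gt1 mod_in_zn unfolding xel_def Bset_def vecs_def evec_def zn_def by auto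

lemma alpha_evec: "alpha n (j mod n) (evec n k) = evec n (k + j)"
proof
  fix m
  show "alpha n (j mod n) (evec n k) m = evec n (k + j) m"
  proof (cases "m \<in> zn n")
    case True
    then have "m mod n = m" by (simp add: zn_def)
    moreover have "(m - j mod n) mod n = k mod n \<longleftrightarrow> m mod n = (k + j) mod n"
      unfolding mod_eq_dvd_iff mod_diff_right_eq by (simp add: algebra_simps)
    ultimately show ?thesis using True unfolding alpha_def evec_def by simp
  next
    case False
    then show ?thesis using mod_in_zn[of "k + j"] unfolding alpha_def evec_def by auto
  qed
qed

lemma bform_evec: "bform n jj (evec n i) (evec n k) = jmod n jj (k - i) mod n"
proof -
  have "(\<Sum>a\<in>zn n. \<Sum>b\<in>zn n. evec n i a * evec n k b * jj ((b - a) mod n))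
      = (\<Sum>a\<in>zn n. if a = i mod n
           then \<Sum>b\<in>zn n. if b = k mod n then jj ((b - a) mod n) else 0 else 0)"
    unfolding evec_def by (intro sum.cong refl) (auto intro: sum.cong)
  also have "\<dots> = jj ((k mod n - i mod n) mod n)"
    using mod_in_zn[of i] mod_in_zn[of k] by (simp add: zn_def)
  finally show ?thesis unfolding bform_def jmod_def by (simp add: mod_diff_eq)
qed

lemma blam_xel: "blam n jj (xel n i j) (xel n k l) = xel n (k + j) (l - jmod n jj (k + j - i))"
  unfolding blam_def xel_def by (simp add: alpha_evec bform_evec mod_diff_eq)

lemma inj_on_alpha: "inj_on (alpha n i) (vecs n)"
proof (rule inj_onI, rule ext)
  fix v v' m
  assume v: "v \<in> vecs n" and v': "v' \<in> vecs n" and eq: "alpha n i v = alpha n i v'"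
  show "v m = v' m"
  proof (cases "m \<in> zn n")
    case True
    then have "((m + i) mod n - i) mod n = m" by (simp add: zn_def mod_diff_left_eq)
    then show ?thesis using fun_cong[OF eq, of "(m + i) mod n"] mod_in_zn unfolding alpha_def by simp
  next
    case False
    then show ?thesis using v v' unfolding vecs_def by simp
  qed
qed

lemma inj_on_blam: "inj_on (blam n jj a) (Bset n)"
proof (rule inj_onI)
  fix x y assume x: "x \<in> Bset n" and y: "y \<in> Bset n" and eq: "blam n jj a x = blam n jj a y"
  obtain u i v j v' j' where a: "a = (u, i)" and xy: "x = (v, j)" "y = (v', j')"
    by (metis prod.collapse)
  have "v = v'"
    using eq x y inj_on_alpha unfolding a xy blam_def Bset_def by (auto dest: inj_onD)
  moreover from this have "j mod n = j' mod n"
    using eq unfolding a xy blam_def by (simp add: mod_eq_dvd_iff)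
  ultimately show "x = y" using x y unfolding xy Bset_def zn_def by simp
qed

lemma blam_inv_xel: "blam_inv n jj (xel n p q) (xel n i j) = xel n (i - q) (j + jmod n jj (i - p))"
  unfolding blam_inv_def
  by (rule the_inv_into_f_eq[OF inj_on_blam]) (simp_all add: blam_xel xel_in_Bset)

lemma gen_subgroup_subset_zn: "gen_subgroup n jj \<subseteq> zn n"
  unfolding gen_subgroup_def using mod_in_zn by auto

lemma gen_subgroup_add_mult_jmod:
  assumes "d mod n \<in> gen_subgroup n jj"
  shows "(d + e * jmod n jj m) mod n \<in> gen_subgroup n jj"
proof -
  obtain c where c: "d mod n = (\<Sum>i\<in>zn n. c i * jj i) mod n"
    using assms unfolding gen_subgroup_def by blast
  define c' where "c' i = c i + (if i = m mod n then e else 0)" for i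
  have "(\<Sum>i\<in>zn n. c' i * jj i) = (\<Sum>i\<in>zn n. c i * jj i) + e * jmod n jj m"
    using mod_in_zn[of m]
    by (simp add: c'_def distrib_right sum.distrib jmod_def zn_def if_distrib[of "\<lambda>x. x * jj _"]
        cong: if_cong)
  then have "(d + e * jmod n jj m) mod n = (\<Sum>i\<in>zn n. c' i * jj i) mod n"
    using c by (metis mod_add_left_eq)
  then show ?thesis unfolding gen_subgroup_def by blast
qed

context
  fixes jj :: "int \<Rightarrow> int"
  assumes jj_range: "\<forall>i\<in>zn n. jj i \<in> zn n"
    and jj_sym: "\<forall>i\<in>zn n. jj i = jj ((- i) mod n)"
begin

lemma jmod_uminus: "jmod n jj (- t) = jmod n jj t"
  using jj_sym mod_in_zn[of t] unfolding jmod_def by (metis mod_minus_eq)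

lemma jmod_in_zn: "jmod n jj t \<in> zn n"
  unfolding jmod_def using jj_range mod_in_zn by blast

lemma rmap_xelp:
  "rmap n jj (map_prod (xelp n) (xelp n) q) = map_prod (xelp n) (xelp n) (rpair (jmod n jj) q)"
proof -
  obtain i j k l where q: "q = ((i, j), (k, l))" by (metis prod.collapse)
  have "jmod n jj (i - (k + j)) = jmod n jj (k + j - i)"
    using jmod_uminus[of "k + j - i"] by simp
  then show ?thesis
    unfolding q rmap_def rpair_def xelp_def by (simp add: blam_xel blam_inv_xel Let_def algebra_simps)
qed

lemma sig_xel: "sig (rmap n jj) (xel n i j) (xel n k l) = xel n (k + j) (l - jmod n jj (k + j - i))"
  using rmap_xelp[of "((i, j), (k, l))"] unfolding sig_def xelp_def rpair_def by (simp add: Let_def)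

lemma gam_xel:
  "gam (rmap n jj) (xel n k l) (xel n i j)
    = xel n (i - l + jmod n jj (k + j - i)) (j + jmod n jj (k + j - i))"
  using rmap_xelp[of "((i, j), (k, l))"] unfolding gam_def xelp_def rpair_def by (simp add: Let_def)

lemma bij_betw_Xset_if_onto:
  assumes "f ` Xset n \<subseteq> Xset n" and "\<And>a b. \<exists>x\<in>Xset n. f x = xel n a b"
  shows "bij_betw f (Xset n) (Xset n)"
proof -
  have "Xset n \<subseteq> f ` Xset n"
  proof
    fix y assume "y \<in> Xset n"
    then obtain a b where "y = xel n a b" by (rule XsetE)
    then show "y \<in> f ` Xset n" using assms(2)[of a b] by (metis image_eqI)
  qed
  with assms(1) show ?thesis
    by (simp add: bij_betw_def finite_Xset finite_surj_inj subset_antisym)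
qed

lemma bij_betw_sig:
  assumes "x \<in> Xset n"
  shows "bij_betw (sig (rmap n jj) x) (Xset n) (Xset n)"
proof -
  obtain i j where x: "x = xel n i j" using assms by (rule XsetE)
  show ?thesis
  proof (rule bij_betw_Xset_if_onto)
    show "sig (rmap n jj) x ` Xset n \<subseteq> Xset n"
      by (auto elim!: XsetE simp: x sig_xel xel_in_Xset)
    fix a b
    have "sig (rmap n jj) x (xel n (a - j) (b + jmod n jj (a - i))) = xel n a b"
      by (simp add: x sig_xel)
    then show "\<exists>y\<in>Xset n. sig (rmap n jj) x y = xel n a b" using xel_in_Xset by blast
  qed
qed

lemma bij_betw_gam:
  assumes "x \<in> Xset n"
  shows "bij_betw (gam (rmap n jj) x) (Xset n) (Xset n)"
proof -
  obtain k l where x: "x = xel n k l" using assms by (rule XsetE)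
  show ?thesis
  proof (rule bij_betw_Xset_if_onto)
    show "gam (rmap n jj) x ` Xset n \<subseteq> Xset n"
      by (auto elim!: XsetE simp: x gam_xel xel_in_Xset)
    fix a b
    define s where "s = jmod n jj (k + b - a - l)"
    have e: "k + (b - s) - (a + l - s) = k + b - a - l" by simp
    have "gam (rmap n jj) x (xel n (a + l - s) (b - s)) = xel n a b"
      unfolding x gam_xel e s_def[symmetric] by simp
    then show "\<exists>y\<in>Xset n. gam (rmap n jj) x y = xel n a b" using xel_in_Xset by blast
  qed
qed

lemma Xset_product_eq_range: "Xset n \<times> Xset n = range (map_prod (xelp n) (xelp n))"
  unfolding Xset_eq_range using map_prod_surj_on[of "xelp n" UNIV _ "xelp n" UNIV] by simp

lemma Xset_product3_eq_range:
  "Xset n \<times> Xset n \<times> Xset n = range (map_prod (xelp n) (map_prod (xelp n) (xelp n)))"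
  unfolding Xset_product_eq_range unfolding Xset_eq_range
  using map_prod_surj_on[of "xelp n" UNIV _ "map_prod (xelp n) (xelp n)" UNIV] by simp

lemma ybe_solution_rmap: "ybe_solution (Xset n) (rmap n jj)"
  unfolding ybe_solution_def
proof (intro conjI ballI)
  fix p assume "p \<in> Xset n \<times> Xset n"
  then obtain q where p: "p = map_prod (xelp n) (xelp n) q" by (auto simp: Xset_product_eq_range)
  show "rmap n jj p \<in> Xset n \<times> Xset n"
    unfolding p rmap_xelp Xset_product_eq_range by simp
  show "rmap n jj (rmap n jj p) = p"
    unfolding p rmap_xelp using rpair_involutive jmod_uminus by metis
next
  fix t assume "t \<in> Xset n \<times> Xset n \<times> Xset n"
  then obtain u where t: "t = map_prod (xelp n) (map_prod (xelp n) (xelp n)) u"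
    by (auto simp: Xset_product3_eq_range)
  show "r12 (rmap n jj) (r23 (rmap n jj) (r12 (rmap n jj) t))
      = r23 (rmap n jj) (r12 (rmap n jj) (r23 (rmap n jj) t))"
    unfolding t r12_map_prod[where R = "rpair (jmod n jj)", OF rmap_xelp]
      r23_map_prod[where R = "rpair (jmod n jj)", OF rmap_xelp]
    using rpair_braid jmod_uminus by metis
qed (simp_all add: bij_betw_sig bij_betw_gam)


section \<open>Orbits of the permutation group\<close>

lemma inv_sig_xel:
  "inv_into (Xset n) (sig (rmap n jj) (xel n i j)) (xel n a b) = xel n (a - j) (b + jmod n jj (a - i))"
  using bij_betw_sig[OF xel_in_Xset]
  by (intro inv_into_f_eq) (auto simp: bij_betw_def sig_xel xel_in_Xset)

lemma sig_group_xel_invariant: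
  assumes "g \<in> sig_group (Xset n) (rmap n jj)"
  shows "\<exists>k' l'. g (xel n k l) = xel n k' l' \<and> (l' - l) mod n \<in> gen_subgroup n jj"
  using assms
proof (induction g rule: sig_group.induct)
  case sg_id
  have "(l - l) mod n \<in> gen_subgroup n jj"
    unfolding gen_subgroup_def mem_Collect_eq by (intro exI[of _ "\<lambda>_. 0"]) simp
  then show ?case by (intro exI[of _ k] exI[of _ l]) simp
next
  case (sg_gen x g)
  obtain i j where x: "x = xel n i j" using sg_gen.hyps(1) by (rule XsetE)
  obtain k' l' where g: "g (xel n k l) = xel n k' l'" and l': "(l' - l) mod n \<in> gen_subgroup n jj"
    using sg_gen.IH by blast
  have "(l' - l + (- 1) * jmod n jj (k' + j - i)) mod n \<in> gen_subgroup n jj"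
    using l' by (rule gen_subgroup_add_mult_jmod)
  then have "(l' - jmod n jj (k' + j - i) - l) mod n \<in> gen_subgroup n jj"
    by (simp add: algebra_simps)
  moreover have "(sig (rmap n jj) x \<circ> g) (xel n k l) = xel n (k' + j) (l' - jmod n jj (k' + j - i))"
    by (simp add: x g sig_xel)
  ultimately show ?case by blast
next
  case (sg_inv x g)
  obtain i j where x: "x = xel n i j" using sg_inv.hyps(1) by (rule XsetE)
  obtain k' l' where g: "g (xel n k l) = xel n k' l'" and l': "(l' - l) mod n \<in> gen_subgroup n jj"
    using sg_inv.IH by blast
  have "(l' - l + 1 * jmod n jj (k' - i)) mod n \<in> gen_subgroup n jj"
    using l' by (rule gen_subgroup_add_mult_jmod)
  then have "(l' + jmod n jj (k' - i) - l) mod n \<in> gen_subgroup n jj"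
    by (simp add: algebra_simps)
  moreover have "(inv_into (Xset n) (sig (rmap n jj) x) \<circ> g) (xel n k l)
      = xel n (k' - j) (l' + jmod n jj (k' - i))"
    by (simp add: x g inv_sig_xel)
  ultimately show ?case by blast
qed

lemma sig_group_shift_mult:
  "\<exists>g\<in>sig_group (Xset n) (rmap n jj). g (xel n k l) = xel n k (l + c * jmod n jj m)"
proof (induction c rule: int_induct[where k = 0])
  case base
  show ?case by (rule bexI[of _ id]) (simp_all add: sig_group.sg_id)
next
  case (step1 c)
  then obtain g where g: "g \<in> sig_group (Xset n) (rmap n jj)"
    and "g (xel n k l) = xel n k (l + c * jmod n jj m)" by blast
  then have "(inv_into (Xset n) (sig (rmap n jj) (xel n (k - m) 0)) \<circ> g) (xel n k l)
      = xel n k (l + (c + 1) * jmod n jj m)"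
    by (simp add: inv_sig_xel algebra_simps)
  then show ?case using sig_group.sg_inv[OF xel_in_Xset g] by blast
next
  case (step2 c)
  then obtain g where g: "g \<in> sig_group (Xset n) (rmap n jj)"
    and "g (xel n k l) = xel n k (l + c * jmod n jj m)" by blast
  then have "(sig (rmap n jj) (xel n (k - m) 0) \<circ> g) (xel n k l) = xel n k (l + (c - 1) * jmod n jj m)"
    by (simp add: sig_xel algebra_simps)
  then show ?case using sig_group.sg_gen[OF xel_in_Xset g] by blast
qed

lemma sig_group_shift_sum:
  assumes "finite S"
  shows "\<exists>g\<in>sig_group (Xset n) (rmap n jj).
    g (xel n k l) = xel n k (l + (\<Sum>i\<in>S. c i * jmod n jj i))"
  using assms
proof (induction S arbitrary: l rule: finite_induct)
  case empty
  show ?case by (rule bexI[of _ id]) (simp_all add: sig_group.sg_id)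
next
  case (insert a S)
  obtain g where g: "g \<in> sig_group (Xset n) (rmap n jj)"
    and eq: "g (xel n k (l + c a * jmod n jj a))
      = xel n k (l + c a * jmod n jj a + (\<Sum>i\<in>S. c i * jmod n jj i))"
    using insert.IH by blast
  obtain h where h: "h \<in> sig_group (Xset n) (rmap n jj)"
    and "h (xel n k l) = xel n k (l + c a * jmod n jj a)"
    using sig_group_shift_mult by blast
  then have "(g \<circ> h) (xel n k l) = xel n k (l + (\<Sum>i\<in>insert a S. c i * jmod n jj i))"
    using eq insert.hyps by (simp add: algebra_simps)
  then show ?case using sig_group_comp[OF g h] by blast
qed

lemma sig_group_orbit_xel:
  "(\<exists>g\<in>sig_group (Xset n) (rmap n jj). g (xel n k l) = xel n k' l')
    \<longleftrightarrow> (l' - l) mod n \<in> gen_subgroup n jj"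
proof
  assume "\<exists>g\<in>sig_group (Xset n) (rmap n jj). g (xel n k l) = xel n k' l'"
  then obtain g where g: "g \<in> sig_group (Xset n) (rmap n jj)" and eq: "g (xel n k l) = xel n k' l'"
    by blast
  obtain k'' l'' where "g (xel n k l) = xel n k'' l''" and l'': "(l'' - l) mod n \<in> gen_subgroup n jj"
    using sig_group_xel_invariant[OF g] by blast
  with eq have "xel n k' l' = xel n k'' l''" by simp
  then have "n dvd l' - l''" by (simp add: xel_eq_iff)
  then have "(l' - l) mod n = (l'' - l) mod n" by (simp add: mod_eq_dvd_iff)
  with l'' show "(l' - l) mod n \<in> gen_subgroup n jj" by simp
next
  assume "(l' - l) mod n \<in> gen_subgroup n jj"
  then have "(l' - l + 1 * jmod n jj k') mod n \<in> gen_subgroup n jj"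
    by (rule gen_subgroup_add_mult_jmod)
  then obtain c where c: "(l' - l + jmod n jj k') mod n = (\<Sum>i\<in>zn n. c i * jj i) mod n"
    unfolding gen_subgroup_def by auto
  have "(\<Sum>i\<in>zn n. c i * jmod n jj i) = (\<Sum>i\<in>zn n. c i * jj i)"
    by (rule sum.cong) (auto simp: jmod_def zn_def)
  then obtain g where g: "g \<in> sig_group (Xset n) (rmap n jj)"
    and "g (xel n k' (l - jmod n jj k')) = xel n k' (l - jmod n jj k' + (\<Sum>i\<in>zn n. c i * jj i))"
    using sig_group_shift_sum[OF finite_zn[of n], where k = k' and l = "l - jmod n jj k'" and c = c] by auto
  moreover have "xel n k' (l - jmod n jj k' + (\<Sum>i\<in>zn n. c i * jj i)) = xel n k' l'"
  proof -
    have "n dvd (\<Sum>i\<in>zn n. c i * jj i) - (l' - l + jmod n jj k')"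
      using c[symmetric] by (simp only: mod_eq_dvd_iff)
    then show ?thesis by (simp add: xel_eq_iff algebra_simps)
  qed
  moreover have "sig (rmap n jj) (xel n 0 (k' - k)) (xel n k l) = xel n k' (l - jmod n jj k')"
    by (simp add: sig_xel)
  ultimately have "(g \<circ> (sig (rmap n jj) (xel n 0 (k' - k)) \<circ> id)) (xel n k l) = xel n k' l'"
    by simp
  then show "\<exists>g\<in>sig_group (Xset n) (rmap n jj). g (xel n k l) = xel n k' l'"
    using sig_group_comp[OF g sig_group.sg_gen[OF xel_in_Xset sig_group.sg_id]] by blast
qed

lemma indecomposable_iff_gen_subgroup:
  "indecomposable (Xset n) (rmap n jj) \<longleftrightarrow> gen_subgroup n jj = zn n"
proof
  assume indec: "indecomposable (Xset n) (rmap n jj)"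
  have "d \<in> gen_subgroup n jj" if "d \<in> zn n" for d
  proof -
    have "(d - 0) mod n \<in> gen_subgroup n jj"
      using indec xel_in_Xset sig_group_orbit_xel unfolding indecomposable_def by blast
    with that show ?thesis by (simp add: zn_def)
  qed
  with gen_subgroup_subset_zn show "gen_subgroup n jj = zn n" by blast
next
  assume gen: "gen_subgroup n jj = zn n"
  show "indecomposable (Xset n) (rmap n jj)"
    unfolding indecomposable_def
  proof (intro ballI)
    fix x y assume "x \<in> Xset n" "y \<in> Xset n"
    then obtain k l k' l' where "x = xel n k l" "y = xel n k' l'" by (metis XsetE)
    with gen show "\<exists>g\<in>sig_group (Xset n) (rmap n jj). g x = y"
      using sig_group_orbit_xel mod_in_zn by simp
  qed
qed

section \<open>Retraction\<close>

lemma sig_xel_eq_on_Xset_iff: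
  "(\<forall>z\<in>Xset n. sig (rmap n jj) (xel n i j) z = sig (rmap n jj) (xel n i' j') z)
    \<longleftrightarrow> n dvd j - j' \<and> (\<forall>k. jmod n jj (k - i) = jmod n jj (k - i'))"
proof
  assume eq: "\<forall>z\<in>Xset n. sig (rmap n jj) (xel n i j) z = sig (rmap n jj) (xel n i' j') z"
  have jj': "n dvd j - j'"
    using eq[rule_format, OF xel_in_Xset[of 0 0]] by (simp add: sig_xel xel_eq_iff)
  have "jmod n jj (k - i) = jmod n jj (k - i')" for k
  proof -
    have "jmod n jj (k - i') = jmod n jj (k - j + j' - i')"
      using jj' by (intro jmod_cong) (simp add: dvd_diff_commute)
    moreover have "n dvd jmod n jj (k - i) - jmod n jj (k - j + j' - i')"
      using eq[rule_format, OF xel_in_Xset[of "k - j" 0]] by (simp add: sig_xel xel_eq_iff dvd_diff_commute)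
    ultimately show ?thesis using zn_eqI jmod_in_zn by metis
  qed
  with jj' show "n dvd j - j' \<and> (\<forall>k. jmod n jj (k - i) = jmod n jj (k - i'))" by blast
next
  assume rows: "n dvd j - j' \<and> (\<forall>k. jmod n jj (k - i) = jmod n jj (k - i'))"
  have "sig (rmap n jj) (xel n i j) (xel n k l) = sig (rmap n jj) (xel n i' j') (xel n k l)" for k l
  proof -
    have "jmod n jj (k + j' - i') = jmod n jj (k + j - i')"
      using rows by (intro jmod_cong) (simp add: dvd_diff_commute)
    also have "\<dots> = jmod n jj (k + j - i)" using rows[THEN conjunct2, rule_format, of "k + j"] by simp
    finally show ?thesis using rows by (simp add: sig_xel xel_eq_iff)
  qed
  then show "\<forall>z\<in>Xset n. sig (rmap n jj) (xel n i j) z = sig (rmap n jj) (xel n i' j') z"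
    by (auto elim!: XsetE)
qed

lemma jmod_rows_eq_iff:
  "(\<forall>k. jmod n jj (k - i) = jmod n jj (k - i'))
    \<longleftrightarrow> (\<forall>k\<in>zn n. jj ((i + k) mod n) = jj ((i' + k) mod n))"
proof
  assume rows: "\<forall>k. jmod n jj (k - i) = jmod n jj (k - i')"
  show "\<forall>k\<in>zn n. jj ((i + k) mod n) = jj ((i' + k) mod n)"
  proof
    fix k
    have "jmod n jj (i + k) = jmod n jj (- k - i)"
      using jmod_uminus[of "i + k"] by (metis minus_add_distrib diff_conv_add_uminus add.commute)
    also have "\<dots> = jmod n jj (- k - i')" using rows by blast
    also have "\<dots> = jmod n jj (i' + k)"
      using jmod_uminus[of "i' + k"] by (metis minus_add_distrib diff_conv_add_uminus add.commute)
    finally show "jj ((i + k) mod n) = jj ((i' + k) mod n)" by (simp add: jmod_def)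
  qed
next
  assume cols: "\<forall>k\<in>zn n. jj ((i + k) mod n) = jj ((i' + k) mod n)"
  have "jmod n jj (k - i) = jmod n jj (k - i')" for k
  proof -
    have shift: "jmod n jj (k - a) = jmod n jj (a + (- k) mod n)" for a
    proof -
      have "jmod n jj (k - a) = jmod n jj (a - k)" using jmod_uminus[of "k - a"] by simp
      also have "\<dots> = jmod n jj (a + (- k) mod n)" by (simp add: jmod_def mod_add_right_eq)
      finally show ?thesis .
    qed
    have "jmod n jj (i + (- k) mod n) = jmod n jj (i' + (- k) mod n)"
      using cols mod_in_zn[of "- k"] by (simp add: jmod_def)
    then show ?thesis by (simp only: shift)
  qed
  then show "\<forall>k. jmod n jj (k - i) = jmod n jj (k - i')" by blast
qed

lemma irretractable_iff_rows_distinct: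
  "irretractable (Xset n) (rmap n jj) \<longleftrightarrow>
    (\<forall>i\<in>zn n. \<forall>i'\<in>zn n. (\<forall>k\<in>zn n. jj ((i + k) mod n) = jj ((i' + k) mod n)) \<longrightarrow> i = i')"
  (is "_ \<longleftrightarrow> ?rows_distinct")
proof
  assume irr: "irretractable (Xset n) (rmap n jj)"
  show ?rows_distinct
  proof (intro ballI impI)
    fix i i' assume i: "i \<in> zn n" and i': "i' \<in> zn n"
      and "\<forall>k\<in>zn n. jj ((i + k) mod n) = jj ((i' + k) mod n)"
    then have "\<forall>z\<in>Xset n. sig (rmap n jj) (xel n i 0) z = sig (rmap n jj) (xel n i' 0) z"
      by (simp add: sig_xel_eq_on_Xset_iff jmod_rows_eq_iff)
    then have "xel n i 0 = xel n i' 0" using irr xel_in_Xset unfolding irretractable_def by blast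
    then show "i = i'" using zn_eqI[OF i i'] by (simp add: xel_eq_iff)
  qed
next
  assume distinct: ?rows_distinct
  show "irretractable (Xset n) (rmap n jj)"
    unfolding irretractable_def
  proof (intro ballI impI)
    fix x y assume "x \<in> Xset n" "y \<in> Xset n" and ne: "x \<noteq> y"
    obtain i j where x: "x = xel n i j" and i: "i \<in> zn n" and j: "j \<in> zn n"
      using \<open>x \<in> Xset n\<close> by (rule XsetE)
    obtain i' j' where y: "y = xel n i' j'" and i': "i' \<in> zn n" and j': "j' \<in> zn n"
      using \<open>y \<in> Xset n\<close> by (rule XsetE)
    show "\<exists>z\<in>Xset n. sig (rmap n jj) x z \<noteq> sig (rmap n jj) y z"
    proof (rule ccontr)
      assume "\<not> ?thesis"
      then have "n dvd j - j'" and "\<forall>k\<in>zn n. jj ((i + k) mod n) = jj ((i' + k) mod n)"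
        by (simp_all add: x y sig_xel_eq_on_Xset_iff jmod_rows_eq_iff)
      then have "i = i'" and "j = j'" using distinct i i' zn_eqI[OF j j'] by blast+
      with ne show False by (simp add: x y)
    qed
  qed
qed

end

end

theorem mainTheorem13:
  fixes n :: int and jj :: "int \<Rightarrow> int"
  assumes "n > 1"
    and "\<forall>i\<in>zn n. jj i \<in> zn n"
    and "\<forall>i\<in>zn n. jj i = jj ((- i) mod n)"
  shows "ybe_solution (Xset n) (rmap n jj)
    \<and> (indecomposable (Xset n) (rmap n jj) \<longleftrightarrow> gen_subgroup n jj = zn n)
    \<and> (irretractable (Xset n) (rmap n jj) \<longleftrightarrow>
         (\<forall>i\<in>zn n. \<forall>i'\<in>zn n.
            (\<forall>k\<in>zn n. jj ((i + k) mod n) = jj ((i' + k) mod n)) \<longrightarrow> i = i'))"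
  using ybe_solution_rmap[OF assms] indecomposable_iff_gen_subgroup[OF assms]
    irretractable_iff_rows_distinct[OF assms]
  by blast

end
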